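(* For any graph $G$, $\Gamma(G)\le\Gamma(G\uparrow\mathcal{B})$.
   Context: Graphs are finite and simple. A Grundy-coloring of $G$ is a proper coloring with nonempty color classes $C_1,\ldots,C_k$ such that for $i<j$ each vertex of $C_j$ has a neighbor in $C_i$; $\Gamma(G)$ is the maximum number of colors of a Grundy-coloring. A block of $G$ is a maximal 2-connected subgraph or a bridge (as a $K_2$). $G\uparrow\mathcal{B}$ is the graph on $V(G)$ obtained from $G$ by adding an edge between every two non-adjacent vertices that belong to a same block of $G$ (so every block becomes a clique). *)

theory Defs
  imports Main
begin

definition simple_graph :: "'a set \<Rightarrow> 'a set set \<Rightarrow> bool" where
  "simple_graph V E \<longleftrightarrow> finite V \<and>
     (\<forall>e\<in>E. \<exists>x y. x \<noteq> y \<and> x \<in> V \<and> y \<in> V \<and> e = {x, y})"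

text \<open>Grundy colouring with colour classes C_1..C_k (class C_i = vertices of colour i).\<close>

definition grundy_coloring :: "'a set \<Rightarrow> 'a set set \<Rightarrow> ('a \<Rightarrow> nat) \<Rightarrow> nat \<Rightarrow> bool" where
  "grundy_coloring V E c k \<longleftrightarrow>
     (\<forall>v\<in>V. c v \<in> {1..k}) \<and>
     (\<forall>i\<in>{1..k}. \<exists>v\<in>V. c v = i) \<and>
     (\<forall>x y. {x, y} \<in> E \<longrightarrow> c x \<noteq> c y) \<and>
     (\<forall>v\<in>V. \<forall>i. 1 \<le> i \<and> i < c v \<longrightarrow> (\<exists>u\<in>V. {u, v} \<in> E \<and> c u = i))"

definition grundy_number :: "'a set \<Rightarrow> 'a set set \<Rightarrow> nat" where
  "grundy_number V E = Max {k. \<exists>c. grundy_coloring V E c k}"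

definition connected_graph :: "'a set \<Rightarrow> 'a set set \<Rightarrow> bool" where
  "connected_graph S F \<longleftrightarrow> S \<noteq> {} \<and>
     (\<forall>x\<in>S. \<forall>y\<in>S. (\<lambda>a b. {a, b} \<in> F \<and> a \<in> S \<and> b \<in> S)\<^sup>*\<^sup>* x y)"

definition subgraph :: "'a set \<Rightarrow> 'a set set \<Rightarrow> 'a set \<Rightarrow> 'a set set \<Rightarrow> bool" where
  "subgraph S F V E \<longleftrightarrow> S \<subseteq> V \<and> F \<subseteq> E \<and> (\<forall>e\<in>F. e \<subseteq> S)"

definition two_connected :: "'a set \<Rightarrow> 'a set set \<Rightarrow> bool" where
  "two_connected S F \<longleftrightarrow> card S \<ge> 3 \<and> connected_graph S F \<and>
     (\<forall>v\<in>S. connected_graph (S - {v}) {e\<in>F. v \<notin> e})"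

definition bridge :: "'a set \<Rightarrow> 'a set set \<Rightarrow> 'a \<Rightarrow> 'a \<Rightarrow> bool" where
  "bridge V E x y \<longleftrightarrow> {x, y} \<in> E \<and>
     \<not> (\<lambda>a b. {a, b} \<in> E - {{x, y}} \<and> a \<in> V \<and> b \<in> V)\<^sup>*\<^sup>* x y"

definition is_block :: "'a set \<Rightarrow> 'a set set \<Rightarrow> 'a set \<Rightarrow> bool" where
  "is_block V E B \<longleftrightarrow>
     (\<exists>F. subgraph B F V E \<and> two_connected B F \<and>
        (\<forall>S' F'. subgraph S' F' V E \<and> two_connected S' F' \<and> B \<subseteq> S' \<and> F \<subseteq> F'
           \<longrightarrow> S' = B \<and> F' = F))
     \<or> (\<exists>x y. bridge V E x y \<and> B = {x, y})"

text \<open>G \<up> B: add every edge between distinct non-adjacent vertices in a common block.\<close>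

definition block_closure :: "'a set \<Rightarrow> 'a set set \<Rightarrow> 'a set set" where
  "block_closure V E = E \<union> {{x, y} | x y. x \<noteq> y \<and> (\<exists>B. is_block V E B \<and> x \<in> B \<and> y \<in> B)}"

end

(* Let c be a Grundy colouring of G with k = Gamma(G) colours and r a vertex of colour k.
   Hang the blocks of G from r: a block B in the component of r has a unique gate, the vertex
   separating the rest of B from r (or r itself), and a vertex is a non-gate vertex of at most
   one block. Keep r and, recursively, for every block whose gate is kept, one vertex of each
   colour that occurs among its non-gate vertices and differs from the colour of the gate.
   Kept vertices of a common block then have distinct colours, so c is proper on the kept
   vertices in G\<up>B. If x is kept and j < c x, the G-neighbour of x of colour j shares a block
   with x, and the kept vertex of colour j in that block is adjacent to x in G\<up>B. Hence c is a
   Grundy colouring of the subgraph of G\<up>B induced by the kept vertices, and it extends greedily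
   to a Grundy colouring of G\<up>B with at least c r = k colours. *)

theory Submission
  imports Defs "HOL-Library.Transitive_Closure_Table" "HOL-Library.Product_Order"
begin

section \<open>Linkage along walks\<close>

definition linked_in :: "'a set set \<Rightarrow> 'a set \<Rightarrow> 'a \<Rightarrow> 'a \<Rightarrow> bool" where
  "linked_in E S = (\<lambda>a b. {a, b} \<in> E \<and> a \<in> S \<and> b \<in> S)\<^sup>*\<^sup>*"

abbreviation walk :: "'a set set \<Rightarrow> 'a list \<Rightarrow> bool" where
  "walk E \<equiv> successively (\<lambda>a b. {a, b} \<in> E)"

lemma linked_in_refl [simp]: "linked_in E S a a"
  by (simp add: linked_in_def)

lemma linked_in_trans: "linked_in E S a b \<Longrightarrow> linked_in E S b c \<Longrightarrow> linked_in E S a c"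
  unfolding linked_in_def by (rule rtranclp_trans)

lemma linked_in_sym:
  assumes "linked_in E S a b"
  shows "linked_in E S b a"
  using assms unfolding linked_in_def
proof induction
  case (step b c)
  then have "{c, b} \<in> E \<and> c \<in> S \<and> b \<in> S"
    by (simp add: insert_commute)
  then show ?case
    using step.IH by (rule converse_rtranclp_into_rtranclp)
qed simp

lemma linked_in_edge: "{a, b} \<in> E \<Longrightarrow> a \<in> S \<Longrightarrow> b \<in> S \<Longrightarrow> linked_in E S a b"
  unfolding linked_in_def by auto

lemma linked_in_mono:
  assumes "linked_in E S a b" "E \<subseteq> E'" "S \<subseteq> S'"
  shows "linked_in E' S' a b"
  using assms(1) unfolding linked_in_def
  by (rule rtranclp_mono[THEN predicate2D, rotated]) (use assms in auto)

lemma linked_in_induced: "T \<subseteq> S \<Longrightarrow> linked_in {e \<in> E. e \<subseteq> S} T = linked_in E T"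
  unfolding linked_in_def by (rule arg_cong[where f = rtranclp]) (auto simp: fun_eq_iff)

lemma linked_in_without_edge:
  assumes "linked_in E T p q" "T \<subseteq> V" "\<not> e \<subseteq> T"
  shows "linked_in (E - {e}) V p q"
proof -
  have "linked_in {e' \<in> E. e' \<subseteq> T} T p q"
    using assms(1) by (simp add: linked_in_induced)
  then show ?thesis
    by (rule linked_in_mono) (use assms(2,3) in auto)
qed

lemma walk_linked_in:
  assumes "walk E ps" "set ps \<subseteq> S" "x \<in> set ps" "y \<in> set ps"
  shows "linked_in E S x y"
proof -
  have to_hd: "linked_in E S x (hd ps)" if "x \<in> set ps" for x
    using assms(1,2) that
  proof (induction ps)
    case (Cons a ps)
    show ?case
    proof (cases "x = a")
      case False
      then have "ps \<noteq> []" "linked_in E S x (hd ps)"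
        using Cons by (auto simp: successively_Cons)
      moreover have "linked_in E S (hd ps) a"
        using Cons.prems \<open>ps \<noteq> []\<close>
        by (intro linked_in_edge) (auto simp: successively_Cons insert_commute)
      ultimately show ?thesis
        using linked_in_trans by fastforce
    qed simp
  qed simp
  show ?thesis
    using linked_in_trans[OF to_hd[OF assms(3)] linked_in_sym[OF to_hd[OF assms(4)]]] .
qed

lemma walk_of_rtrancl_path:
  assumes "rtrancl_path (\<lambda>a b. {a, b} \<in> E \<and> a \<in> S \<and> b \<in> S) a xs b"
  shows "walk E (a # xs) \<and> last (a # xs) = b \<and> set xs \<subseteq> S"
  using assms by induction auto

lemma linked_in_walk:
  assumes "linked_in E S a b" "a \<in> S"
  obtains ps where "ps \<noteq> []" "hd ps = a" "last ps = b" "distinct ps" "walk E ps" "set ps \<subseteq> S"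
proof -
  obtain xs where "rtrancl_path (\<lambda>a b. {a, b} \<in> E \<and> a \<in> S \<and> b \<in> S) a xs b"
    using assms(1) unfolding linked_in_def rtranclp_eq_rtrancl_path by blast
  then obtain xs' where "rtrancl_path (\<lambda>a b. {a, b} \<in> E \<and> a \<in> S \<and> b \<in> S) a xs' b"
    "distinct (a # xs')"
    by (rule rtrancl_path_distinct)
  with walk_of_rtrancl_path[OF this(1)] show ?thesis
    using that[of "a # xs'"] assms(2) by auto
qed

lemma walk_split:
  assumes "walk E ps" "distinct ps" "w \<in> set ps - D" "D \<subseteq> {v}"
  shows "\<exists>e\<in>{hd ps, last ps} - D. linked_in E (set ps - D) w e"
proof (cases "v \<in> D \<and> v \<in> set ps")
  case False
  then have "set ps \<inter> D = {}"
    using assms(4) by auto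
  moreover have "hd ps \<in> set ps"
    using assms(3) by (cases ps) auto
  ultimately show ?thesis
    using assms walk_linked_in[OF assms(1), of "set ps - D" w "hd ps"] by auto
next
  case True
  then have D: "D = {v}"
    using assms(4) by auto
  obtain xs ys where ps: "ps = xs @ v # ys"
    using True split_list by metis
  have walks: "walk E xs" "walk E ys"
    using assms(1) unfolding ps by (auto simp: successively_append_iff successively_Cons)
  have sets: "set xs \<subseteq> set ps - D" "set ys \<subseteq> set ps - D"
    using assms(2) unfolding ps D by auto
  consider "w \<in> set xs" | "w \<in> set ys"
    using assms(3) unfolding ps D by auto
  then show ?thesis
  proof cases
    case 1
    then have "hd ps = hd xs" "hd xs \<in> set xs"
      unfolding ps by (cases xs; simp)+
    then show ?thesis
      using 1 walks sets walk_linked_in[of E xs "set ps - D" w "hd xs"] by auto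
  next
    case 2
    then have "last ps = last ys" "last ys \<in> set ys"
      unfolding ps by (cases ys rule: rev_cases; simp)+
    then show ?thesis
      using 2 walks sets walk_linked_in[of E ys "set ps - D" w "last ys"] by auto
  qed
qed

lemma linked_in_avoid:
  assumes "linked_in E S a r" "a \<in> S" "b \<noteq> a"
  shows "linked_in E (S - {b}) a r \<or> linked_in E (S - {a}) b r"
proof -
  obtain ps where ps: "ps \<noteq> []" "hd ps = a" "last ps = r" "distinct ps" "walk E ps" "set ps \<subseteq> S"
    using assms(1,2) by (rule linked_in_walk)
  show ?thesis
  proof (cases "b \<in> set ps")
    case False
    then have "set ps \<subseteq> S - {b}"
      using ps(6) by auto
    then have "linked_in E (S - {b}) a r"
      using ps walk_linked_in[of E ps "S - {b}" a r] by auto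
    then show ?thesis ..
  next
    case True
    then obtain e where "e \<in> {a, r} - {a}" "linked_in E (set ps - {a}) b e"
      using walk_split[OF ps(5,4), of b "{a}" a] assms(3) ps(2,3) by auto
    then have "linked_in E (S - {a}) b r"
      using ps(6) by (auto intro: linked_in_mono)
    then show ?thesis ..
  qed
qed

section \<open>Nonseparable vertex sets\<close>

definition connected_in :: "'a set set \<Rightarrow> 'a set \<Rightarrow> bool" where
  "connected_in E S \<longleftrightarrow> (\<forall>a\<in>S. \<forall>b\<in>S. linked_in E S a b)"

text \<open>At most one vertex is deleted. Unlike \<^const>\<open>two_connected\<close>, this admits \<open>K\<^sub>2\<close>, so that
  blocks of both kinds are nonseparable.\<close>

definition nonseparable :: "'a set set \<Rightarrow> 'a set \<Rightarrow> bool" where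
  "nonseparable E S \<longleftrightarrow> (\<forall>v D. D \<subseteq> {v} \<longrightarrow> connected_in E (S - D))"

lemma connected_in_hub:
  assumes "\<And>w. w \<in> S \<Longrightarrow> linked_in E S w h"
  shows "connected_in E S"
proof -
  have "linked_in E S a b" if "a \<in> S" "b \<in> S" for a b
    using linked_in_trans[OF assms[OF that(1)] linked_in_sym[OF assms[OF that(2)]]] .
  then show ?thesis
    unfolding connected_in_def by blast
qed

lemma nonseparable_linked_in:
  "nonseparable E S \<Longrightarrow> a \<in> S - D \<Longrightarrow> b \<in> S - D \<Longrightarrow> D \<subseteq> {v} \<Longrightarrow> linked_in E (S - D) a b"
  unfolding nonseparable_def connected_in_def by blast

lemma nonseparable_linked_in_superset:
  assumes "nonseparable E S" "S \<subseteq> H" "D \<subseteq> {v}" "a \<in> S - D" "b \<in> S - D"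
  shows "linked_in E (H - D) a b"
  using nonseparable_linked_in[OF assms(1,4,5,3)] by (rule linked_in_mono) (use assms(2) in auto)

lemma nonseparable_mono: "nonseparable F S \<Longrightarrow> F \<subseteq> E \<Longrightarrow> nonseparable E S"
  unfolding nonseparable_def connected_in_def by (blast intro: linked_in_mono)

lemma nonseparableI:
  assumes "\<And>v D. D \<subseteq> {v} \<Longrightarrow> \<exists>h. \<forall>w\<in>S - D. linked_in E (S - D) w h"
  shows "nonseparable E S"
  unfolding nonseparable_def using assms connected_in_hub by metis

lemma nonseparable_cycle:
  assumes "walk E ps" "distinct ps" "{hd ps, last ps} \<in> E"
  shows "nonseparable E (set ps)"
proof (rule nonseparableI)
  fix v and D :: "'a set"
  assume D: "D \<subseteq> {v}"
  define h where "h = (if hd ps \<in> D then last ps else hd ps)"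
  have "linked_in E (set ps - D) w h" if w: "w \<in> set ps - D" for w
  proof -
    have ends: "hd ps \<in> set ps" "last ps \<in> set ps"
      using w by (cases ps; auto)+
    obtain e where e: "e \<in> {hd ps, last ps} - D" "linked_in E (set ps - D) w e"
      using walk_split[OF assms(1,2) w D] by blast
    show ?thesis
    proof (cases "e = h")
      case False
      then have "e = last ps" "h = hd ps" "hd ps \<notin> D"
        using e(1) unfolding h_def by (auto split: if_splits)
      then have "linked_in E (set ps - D) e h"
        using assms(3) e(1) ends by (intro linked_in_edge) (auto simp: insert_commute)
      then show ?thesis
        using e(2) by (rule linked_in_trans[rotated])
    qed (use e in simp)
  qed
  then show "\<exists>h. \<forall>w\<in>set ps - D. linked_in E (set ps - D) w h"
    by blast
qed

lemma nonseparable_glue: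
  assumes S1: "nonseparable E S1" and S2: "nonseparable E S2" and x: "x \<in> S1" "x \<in> S2"
    and ps: "walk E ps" "distinct ps" "ps \<noteq> []" "x \<notin> set ps" "hd ps \<in> S1" "last ps \<in> S2"
  shows "nonseparable E (S1 \<union> S2 \<union> set ps)"
proof (rule nonseparableI)
  fix v and D :: "'a set"
  assume D: "D \<subseteq> {v}"
  define H where "H = S1 \<union> S2 \<union> set ps"
  define h where "h = (if x \<in> D then hd ps else x)"
  have ends: "hd ps \<in> set ps" "last ps \<in> set ps"
    using ps(3) by auto
  have parts: "S1 \<subseteq> H" "S2 \<subseteq> H" "set ps \<subseteq> H"
    unfolding H_def by auto
  have h: "h \<in> S1 - D"
    using x ps(4,5) D ends unfolding h_def by auto
  have from_S1: "linked_in E (H - D) w h" if "w \<in> S1 - D" for w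
    using nonseparable_linked_in_superset[OF S1 parts(1) D that h] .
  obtain g where g: "g \<in> S2 - D" "linked_in E (H - D) g h"
  proof (cases "x \<in> D")
    case True
    then have "set ps \<subseteq> H - D"
      using D ps(4) parts(3) by auto
    then have "linked_in E (H - D) (last ps) (hd ps)"
      using walk_linked_in[OF ps(1) _ ends(2,1)] by blast
    moreover have "last ps \<in> S2 - D"
      using True D ps(4,6) ends by auto
    ultimately show ?thesis
      using that True unfolding h_def by simp
  next
    case False
    then show ?thesis
      using that[of x] x(2) unfolding h_def by simp
  qed
  have from_S2: "linked_in E (H - D) w h" if "w \<in> S2 - D" for w
    using linked_in_trans[OF nonseparable_linked_in_superset[OF S2 parts(2) D that g(1)] g(2)] .
  have from_ps: "linked_in E (H - D) w h" if w: "w \<in> set ps - D" for w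
  proof -
    obtain e where e: "e \<in> {hd ps, last ps} - D" "linked_in E (set ps - D) w e"
      using walk_split[OF ps(1,2) w D] by blast
    then have "linked_in E (H - D) w e"
      using parts(3) by (rule_tac linked_in_mono) auto
    moreover have "linked_in E (H - D) e h"
      using e(1) from_S1 from_S2 ps(5,6) by auto
    ultimately show ?thesis
      by (rule linked_in_trans)
  qed
  show "\<exists>h. \<forall>w\<in>H - D. linked_in E (H - D) w h"
    using from_S1 from_S2 from_ps unfolding H_def by blast
qed

lemma nonseparable_Un:
  assumes "nonseparable E S1" "nonseparable E S2" "a \<noteq> b" "a \<in> S1" "a \<in> S2" "b \<in> S1" "b \<in> S2"
  shows "nonseparable E (S1 \<union> S2)"
  using nonseparable_glue[OF assms(1,2,4,5), of "[b]"] assms(3,6,7)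
  by (simp add: insert_absorb)

lemma nonseparable_iff:
  "nonseparable E S \<longleftrightarrow> connected_in E S \<and> (\<forall>v\<in>S. connected_in E (S - {v}))"
proof
  assume "nonseparable E S"
  then have "connected_in E (S - {})" "\<And>v. connected_in E (S - {v})"
    unfolding nonseparable_def by blast+
  then show "connected_in E S \<and> (\<forall>v\<in>S. connected_in E (S - {v}))"
    by simp
next
  assume conn: "connected_in E S \<and> (\<forall>v\<in>S. connected_in E (S - {v}))"
  have "connected_in E (S - D)" if "D \<subseteq> {v}" for v D
  proof -
    have "S - D = S \<or> (v \<in> S \<and> S - D = S - {v})"
      using that by auto
    then show ?thesis
      using conn by auto
  qed
  then show "nonseparable E S"
    unfolding nonseparable_def by blast
qed

lemma connected_graph_iff: "connected_graph S F \<longleftrightarrow> S \<noteq> {} \<and> connected_in F S"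
  by (simp add: connected_graph_def connected_in_def linked_in_def)

lemma linked_in_delete: "linked_in {e \<in> F. v \<notin> e} (S - {v}) = linked_in F (S - {v})"
  unfolding linked_in_def by (rule arg_cong[where f = rtranclp]) (auto simp: fun_eq_iff)

lemma two_connected_iff_nonseparable:
  "two_connected S F \<longleftrightarrow> 3 \<le> card S \<and> nonseparable F S"
proof -
  have "S - {v} \<noteq> {}" if "3 \<le> card S" for v
  proof
    assume "S - {v} = {}"
    then have "card S \<le> card {v}"
      by (intro card_mono) auto
    then show False
      using that by simp
  qed
  then show ?thesis
    unfolding two_connected_def nonseparable_iff connected_graph_iff connected_in_def linked_in_delete
    by blast
qed

section \<open>Blocks\<close>

lemma simple_graph_edgeD:
  assumes "simple_graph V E" "{x, y} \<in> E"
  shows "x \<noteq> y" "x \<in> V" "y \<in> V"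
  using assms unfolding simple_graph_def by (metis doubleton_eq_iff)+

lemma simple_graph_finite_edges:
  assumes "simple_graph V E"
  shows "finite E"
proof (rule finite_subset)
  show "E \<subseteq> Pow V"
    using assms unfolding simple_graph_def by auto
  show "finite (Pow V)"
    using assms unfolding simple_graph_def by simp
qed

lemma two_connected_induced:
  assumes "S \<subseteq> V" "3 \<le> card S" "nonseparable E S"
  shows "subgraph S {e \<in> E. e \<subseteq> S} V E" "two_connected S {e \<in> E. e \<subseteq> S}"
proof -
  show "subgraph S {e \<in> E. e \<subseteq> S} V E"
    using assms(1) unfolding subgraph_def by auto
  have "nonseparable {e \<in> E. e \<subseteq> S} S"
    using assms(3) unfolding nonseparable_def connected_in_def
    by (simp add: linked_in_induced[OF Diff_subset])
  then show "two_connected S {e \<in> E. e \<subseteq> S}"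
    using assms(2) by (simp add: two_connected_iff_nonseparable)
qed

lemma bridge_neq: "bridge V E x y \<Longrightarrow> x \<noteq> y"
  unfolding bridge_def by auto

lemma block_nonseparable:
  assumes "is_block V E B"
  shows "nonseparable E B"
  using assms unfolding is_block_def
proof (elim disjE exE conjE)
  fix F
  assume "subgraph B F V E" "two_connected B F"
  then show ?thesis
    unfolding subgraph_def two_connected_iff_nonseparable by (blast intro: nonseparable_mono)
next
  fix x y
  assume "bridge V E x y" "B = {x, y}"
  then show ?thesis
    using nonseparable_cycle[of E "[x, y]"] bridge_neq unfolding bridge_def by auto
qed

lemma block_subset:
  assumes "simple_graph V E" "is_block V E B"
  shows "B \<subseteq> V"
  using assms(2) unfolding is_block_def subgraph_def bridge_def
  by (auto dest: simple_graph_edgeD[OF assms(1)])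

lemma block_linked_in:
  assumes "simple_graph V E" "is_block V E B" "a \<in> B" "b \<in> B"
  shows "linked_in E V a b"
proof -
  have "linked_in E B a b"
    using block_nonseparable[OF assms(2)] assms(3,4) unfolding nonseparable_iff connected_in_def
    by blast
  then show ?thesis
    using block_subset[OF assms(1,2)] by (rule linked_in_mono[OF _ order_refl])
qed

lemma exists_block_superset:
  assumes "finite V" "finite E" "subgraph S F V E" "two_connected S F"
  obtains B where "is_block V E B" "S \<subseteq> B"
proof -
  define C where "C = {(S', F'). subgraph S' F' V E \<and> two_connected S' F'}"
  have "C \<subseteq> Pow V \<times> Pow E"
    unfolding C_def subgraph_def by auto
  then have "finite C"
    using assms(1,2) by (simp add: finite_subset)
  moreover have "(S, F) \<in> C"
    using assms(3,4) unfolding C_def by simp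
  ultimately obtain m where "m \<in> C" "(S, F) \<le> m" "\<forall>p\<in>C. m \<le> p \<longrightarrow> m = p"
    using finite_has_maximal2 by blast
  moreover obtain B FB where "m = (B, FB)"
    by fastforce
  ultimately have "is_block V E B" "S \<subseteq> B"
    unfolding is_block_def C_def by (auto intro!: exI[of _ FB])
  then show ?thesis
    using that by blast
qed

lemma bridge_iff: "bridge V E x y \<longleftrightarrow> {x, y} \<in> E \<and> \<not> linked_in (E - {{x, y}}) V x y"
  by (simp add: bridge_def linked_in_def)

lemma bridge_not_in_nonseparable:
  assumes br: "bridge V E x y" and S: "S \<subseteq> V" "nonseparable E S" "finite S" "3 \<le> card S"
    and xy: "x \<in> S" "y \<in> S"
  shows False
proof -
  have "card {x, y} \<le> 2"
    by (cases "x = y") auto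
  then have "\<not> S \<subseteq> {x, y}"
    using S(3,4) card_mono[of "{x, y}" S] by auto
  then obtain z where z: "z \<in> S" "z \<noteq> x" "z \<noteq> y"
    by blast
  have "linked_in E (S - {y}) x z" "linked_in E (S - {x}) z y"
    using nonseparable_linked_in[OF S(2), of _ "{y}"] nonseparable_linked_in[OF S(2), of _ "{x}"]
      bridge_neq[OF br] xy z by auto
  then have "linked_in (E - {{x, y}}) V x z" "linked_in (E - {{x, y}}) V z y"
    using S(1) by (auto intro: linked_in_without_edge)
  then have "linked_in (E - {{x, y}}) V x y"
    by (rule linked_in_trans)
  then show False
    using br by (simp add: bridge_iff)
qed

lemma block_maximal:
  assumes G: "simple_graph V E" and B: "is_block V E B" and S: "S \<subseteq> V" "nonseparable E S"
    and ab: "a \<noteq> b" "a \<in> S" "b \<in> S" "a \<in> B" "b \<in> B"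
  shows "S \<subseteq> B"
proof -
  have "finite V"
    using G unfolding simple_graph_def by simp
  then have fin: "finite S" "finite (S \<union> B)"
    using S(1) block_subset[OF G B] by (auto intro: finite_subset)
  consider "card S \<le> 2" | "3 \<le> card S"
    by linarith
  then show ?thesis
  proof cases
    case 1
    then have "{a, b} = S"
      using ab fin(1) by (intro card_seteq) auto
    then show ?thesis
      using ab by auto
  next
    case 2
    from B show ?thesis
      unfolding is_block_def
    proof (elim disjE exE conjE)
      fix FB
      assume sub: "subgraph B FB V E"
        and max: "\<forall>S' F'. subgraph S' F' V E \<and> two_connected S' F' \<and> B \<subseteq> S' \<and> FB \<subseteq> F'
                   \<longrightarrow> S' = B \<and> F' = FB"
      let ?U = "S \<union> B"
      have "?U \<subseteq> V"
        using S(1) block_subset[OF G B] by simp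
      moreover have "3 \<le> card ?U"
        using 2 card_mono[OF fin(2), of S] by simp
      moreover have "nonseparable E ?U"
        using nonseparable_Un[OF S(2) block_nonseparable[OF B] ab(1,2,4,3,5)] .
      ultimately have "subgraph ?U {e \<in> E. e \<subseteq> ?U} V E" "two_connected ?U {e \<in> E. e \<subseteq> ?U}"
        using two_connected_induced by blast+
      moreover have "FB \<subseteq> {e \<in> E. e \<subseteq> ?U}"
        using sub unfolding subgraph_def by auto
      ultimately have "?U = B \<and> {e \<in> E. e \<subseteq> ?U} = FB"
        by (intro max[rule_format]) auto
      then show ?thesis
        by auto
    next
      fix x y
      assume "bridge V E x y" "B = {x, y}"
      then show ?thesis
        using bridge_not_in_nonseparable[OF _ S fin(1) 2] ab by blast
    qed
  qed
qed

lemma blocks_eq: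
  assumes G: "simple_graph V E" and B1: "is_block V E B1" and B2: "is_block V E B2"
    and ab: "a \<noteq> b" "a \<in> B1" "b \<in> B1" "a \<in> B2" "b \<in> B2"
  shows "B1 = B2"
  using block_maximal[OF G B1 block_subset[OF G B2] block_nonseparable[OF B2] ab(1,4,5,2,3)]
    block_maximal[OF G B2 block_subset[OF G B1] block_nonseparable[OF B1] ab]
  by (rule subset_antisym[rotated])

lemma edge_in_block:
  assumes G: "simple_graph V E" and e: "{x, y} \<in> E"
  obtains B where "is_block V E B" "x \<in> B" "y \<in> B"
proof (cases "bridge V E x y")
  case True
  then show ?thesis
    using that unfolding is_block_def by blast
next
  case False
  then have "linked_in (E - {{x, y}}) V x y"
    using e by (simp add: bridge_iff)
  then obtain ps where ps: "ps \<noteq> []" "hd ps = x" "last ps = y" "distinct ps"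
    "walk (E - {{x, y}}) ps" "set ps \<subseteq> V"
    using simple_graph_edgeD[OF G e] by (elim linked_in_walk)
  have "walk E ps"
    using ps(5) by (rule successively_mono) auto
  then have "nonseparable E (set ps)"
    using nonseparable_cycle ps(2-4) e by auto
  moreover have "3 \<le> length ps"
    using ps(1-3,5) simple_graph_edgeD(1)[OF G e]
    by (cases ps; cases "tl ps"; cases "tl (tl ps)") auto
  then have "3 \<le> card (set ps)"
    using ps(4) by (simp add: distinct_card)
  moreover have "finite V" "finite E"
    using G simple_graph_finite_edges unfolding simple_graph_def by auto
  ultimately obtain B where "is_block V E B" "set ps \<subseteq> B"
    using exists_block_superset two_connected_induced[OF ps(6)] by blast
  moreover have "x \<in> set ps" "y \<in> set ps"
    using ps(1-3) by auto
  ultimately show ?thesis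
    using that by blast
qed

lemma blocks_eq_if_linked_avoiding:
  assumes G: "simple_graph V E" and B1: "is_block V E B1" and B2: "is_block V E B2"
    and x: "x \<in> B1" "x \<in> B2" and y: "y1 \<in> B1" "y1 \<noteq> x" "y2 \<in> B2" "y2 \<noteq> x"
    and link: "linked_in E (V - {x}) y1 y2"
  shows "B1 = B2"
proof -
  have "y1 \<in> V - {x}"
    using block_subset[OF G B1] y by auto
  with link obtain ps where ps: "ps \<noteq> []" "hd ps = y1" "last ps = y2" "distinct ps" "walk E ps"
    "set ps \<subseteq> V - {x}"
    by (elim linked_in_walk)
  let ?H = "B1 \<union> B2 \<union> set ps"
  have "nonseparable E ?H"
    using nonseparable_glue[OF block_nonseparable[OF B1] block_nonseparable[OF B2] x ps(5,4,1)]
      ps(2,3,6) y by auto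
  moreover have "?H \<subseteq> V"
    using block_subset[OF G B1] block_subset[OF G B2] ps(6) by auto
  ultimately have "?H \<subseteq> B2"
    using block_maximal[OF G B2] x y by blast
  then show ?thesis
    using blocks_eq[OF G B1 B2 y(2)] x y by auto
qed

lemma block_closure_edge_iff:
  assumes G: "simple_graph V E"
  shows "{x, y} \<in> block_closure V E \<longleftrightarrow> x \<noteq> y \<and> (\<exists>B. is_block V E B \<and> x \<in> B \<and> y \<in> B)"
proof
  assume e: "{x, y} \<in> block_closure V E"
  show "x \<noteq> y \<and> (\<exists>B. is_block V E B \<and> x \<in> B \<and> y \<in> B)"
  proof (cases "{x, y} \<in> E")
    case True
    then show ?thesis
      using simple_graph_edgeD(1)[OF G True] edge_in_block[OF G True] by metis
  next
    case False
    then show ?thesis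
      using e unfolding block_closure_def by (auto simp: doubleton_eq_iff)
  qed
qed (auto simp: block_closure_def)

lemma simple_graph_block_closure:
  assumes G: "simple_graph V E"
  shows "simple_graph V (block_closure V E)"
  using G block_subset[OF G] unfolding simple_graph_def block_closure_def by blast

section \<open>Gates\<close>

definition gate :: "'a set \<Rightarrow> 'a set set \<Rightarrow> 'a \<Rightarrow> 'a set \<Rightarrow> 'a \<Rightarrow> bool" where
  "gate V E r B a \<longleftrightarrow> a \<in> B \<and> (a = r \<or> (\<forall>y\<in>B - {a}. \<not> linked_in E (V - {a}) y r))"

lemma non_gate_block_unique:
  assumes G: "simple_graph V E" and B1: "is_block V E B1" and B2: "is_block V E B2"
    and x1: "x \<in> B1" "\<not> gate V E r B1 x" and x2: "x \<in> B2" "\<not> gate V E r B2 x"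
  shows "B1 = B2"
proof -
  obtain y1 where y1: "y1 \<in> B1" "y1 \<noteq> x" "linked_in E (V - {x}) y1 r"
    using x1 unfolding gate_def by blast
  obtain y2 where y2: "y2 \<in> B2" "y2 \<noteq> x" "linked_in E (V - {x}) y2 r"
    using x2 unfolding gate_def by blast
  have "linked_in E (V - {x}) y1 y2"
    using linked_in_trans[OF y1(3) linked_in_sym[OF y2(3)]] .
  then show ?thesis
    using blocks_eq_if_linked_avoiding[OF G B1 B2 x1(1) x2(1) y1(1,2) y2(1,2)] by blast
qed

lemma gate_unique:
  assumes G: "simple_graph V E" and B: "is_block V E B"
    and a: "gate V E r B a" and b: "gate V E r B b" and w: "w \<in> B" "linked_in E V w r"
  shows "a = b"
proof (rule ccontr)
  assume ab: "a \<noteq> b"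
  have "a \<in> B" "b \<in> B"
    using a b unfolding gate_def by auto
  have not_root: "x \<noteq> r" if "gate V E r B x" "gate V E r B y" "x \<in> B" "x \<noteq> y" for x y
  proof
    assume "x = r"
    then have "x \<in> B - {y}" "linked_in E (V - {y}) x r"
      using that(3,4) by auto
    then show False
      using that(2,4) \<open>x = r\<close> unfolding gate_def by blast
  qed
  have BV: "B \<subseteq> V"
    using block_subset[OF G B] .
  have "linked_in E V a w"
    using block_linked_in[OF G B \<open>a \<in> B\<close> w(1)] .
  then have "linked_in E V a r"
    using w(2) by (rule linked_in_trans)
  then have "linked_in E (V - {b}) a r \<or> linked_in E (V - {a}) b r"
    using BV \<open>a \<in> B\<close> ab by (intro linked_in_avoid) auto
  then show False
    using a b ab not_root[OF a b] not_root[OF b a] \<open>a \<in> B\<close> \<open>b \<in> B\<close> unfolding gate_def by blast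
qed

section \<open>Partial Grundy colourings\<close>

definition grundy_on :: "'a set set \<Rightarrow> 'a set \<Rightarrow> ('a \<Rightarrow> nat) \<Rightarrow> bool" where
  "grundy_on E W c \<longleftrightarrow> (\<forall>v\<in>W. 1 \<le> c v) \<and> (\<forall>x\<in>W. \<forall>y\<in>W. {x, y} \<in> E \<longrightarrow> c x \<noteq> c y) \<and>
     (\<forall>v\<in>W. \<forall>i. 1 \<le> i \<and> i < c v \<longrightarrow> (\<exists>u\<in>W. {u, v} \<in> E \<and> c u = i))"

lemma least_positive_missing:
  assumes "finite (A :: nat set)"
  obtains m where "1 \<le> m" "m \<notin> A" "\<And>i. 1 \<le> i \<Longrightarrow> i < m \<Longrightarrow> i \<in> A"
proof -
  obtain i where "i \<notin> insert 0 A"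
    using ex_new_if_finite[OF infinite_UNIV_nat] assms by blast
  then have "1 \<le> i \<and> i \<notin> A"
    by simp
  then have "1 \<le> (LEAST i. 1 \<le> i \<and> i \<notin> A) \<and> (LEAST i. 1 \<le> i \<and> i \<notin> A) \<notin> A"
    by (rule LeastI)
  moreover have "i \<in> A" if "1 \<le> i" "i < (LEAST i. 1 \<le> i \<and> i \<notin> A)" for i
    using not_less_Least[OF that(2)] that(1) by blast
  ultimately show ?thesis
    using that by blast
qed

lemma grundy_on_insert:
  assumes loopfree: "\<forall>x. {x, x} \<notin> E" and W: "finite W" "grundy_on E W c"
  obtains c' where "grundy_on E (insert v W) c'" "\<forall>w\<in>W. c' w = c w"
proof (cases "v \<in> W")
  case True
  then show ?thesis
    using that W(2) by (simp add: insert_absorb)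
next
  case False
  let ?used = "c ` {u \<in> W. {u, v} \<in> E}"
  obtain m where m: "1 \<le> m" "m \<notin> ?used" and below_m: "\<And>i. 1 \<le> i \<Longrightarrow> i < m \<Longrightarrow> i \<in> ?used"
    using least_positive_missing[of ?used] W(1) by auto
  define c' where "c' = c(v := m)"
  have "grundy_on E (insert v W) c'"
    unfolding grundy_on_def
  proof (intro conjI ballI allI impI)
    fix w
    assume "w \<in> insert v W"
    then show "1 \<le> c' w"
      using W(2) m(1) unfolding grundy_on_def c'_def by auto
  next
    fix x y
    assume "x \<in> insert v W" "y \<in> insert v W" "{x, y} \<in> E"
    then show "c' x \<noteq> c' y"
      using W(2) m(2) loopfree False unfolding grundy_on_def c'_def
      by (auto simp: insert_commute)
  next
    fix w i
    assume w: "w \<in> insert v W" and i: "1 \<le> i \<and> i < c' w"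
    show "\<exists>u\<in>insert v W. {u, w} \<in> E \<and> c' u = i"
    proof (cases "w = v")
      case True
      then show ?thesis
        using below_m[of i] i False unfolding c'_def by fastforce
    next
      case False
      then show ?thesis
        using W(2) w i \<open>v \<notin> W\<close> unfolding grundy_on_def c'_def by fastforce
    qed
  qed
  then show ?thesis
    using that False unfolding c'_def by auto
qed

lemma grundy_on_extend:
  assumes loopfree: "\<forall>x. {x, x} \<notin> E" and V: "finite V" "W \<subseteq> V" and W: "grundy_on E W c"
  obtains c' where "grundy_on E V c'" "\<forall>w\<in>W. c' w = c w"
proof -
  have "\<exists>c'. grundy_on E (W \<union> D) c' \<and> (\<forall>w\<in>W. c' w = c w)" if "finite D" for D
    using that
  proof induction
    case empty
    then show ?case
      using W by auto
  next
    case (insert d D)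
    then obtain c1 where c1: "grundy_on E (W \<union> D) c1" "\<forall>w\<in>W. c1 w = c w"
      by blast
    moreover have "finite (W \<union> D)"
      using V insert(1) by (auto intro: finite_subset)
    ultimately obtain c2 where "grundy_on E (insert d (W \<union> D)) c2" "\<forall>w\<in>W \<union> D. c2 w = c1 w"
      using grundy_on_insert[OF loopfree] by metis
    then show ?case
      using c1(2) by auto
  qed
  from this[of "V - W"] show ?thesis
    using V that by (auto simp: Un_absorb1)
qed

lemma grundy_on_of_grundy_coloring: "grundy_coloring V E c k \<Longrightarrow> grundy_on E V c"
  unfolding grundy_coloring_def grundy_on_def by auto

lemma grundy_coloring_of_grundy_on:
  assumes G: "simple_graph V E" and c: "grundy_on E V c" and V: "V \<noteq> {}"
  shows "grundy_coloring V E c (Max (c ` V))"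
proof -
  have fin: "finite V"
    using G unfolding simple_graph_def by simp
  have "Max (c ` V) \<in> c ` V"
    using fin V by (intro Max_in) auto
  then obtain v0 where v0: "v0 \<in> V" "c v0 = Max (c ` V)"
    by auto
  show ?thesis
    unfolding grundy_coloring_def
  proof (intro conjI ballI allI impI)
    fix v
    assume "v \<in> V"
    then show "c v \<in> {1..Max (c ` V)}"
      using c fin unfolding grundy_on_def by auto
  next
    fix i
    assume "i \<in> {1..Max (c ` V)}"
    show "\<exists>v\<in>V. c v = i"
    proof (cases "i = c v0")
      case False
      then have "1 \<le> i \<and> i < c v0"
        using \<open>i \<in> {1..Max (c ` V)}\<close> v0(2) by auto
      then show ?thesis
        using c v0(1) unfolding grundy_on_def by blast
    qed (use v0 in blast)
  next
    fix x y
    assume "{x, y} \<in> E"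
    then show "c x \<noteq> c y"
      using c simple_graph_edgeD[OF G] unfolding grundy_on_def by blast
  next
    fix v i
    assume "v \<in> V" "1 \<le> i \<and> i < c v"
    then show "\<exists>u\<in>V. {u, v} \<in> E \<and> c u = i"
      using c unfolding grundy_on_def by blast
  qed
qed

lemma grundy_coloring_le_card:
  assumes "finite V" "grundy_coloring V E c k"
  shows "k \<le> card V"
proof -
  have "{1..k} \<subseteq> c ` V"
    using assms(2) unfolding grundy_coloring_def by fastforce
  then have "card {1..k} \<le> card (c ` V)"
    using assms(1) by (intro card_mono) auto
  also have "\<dots> \<le> card V"
    using assms(1) by (rule card_image_le)
  finally show ?thesis
    by simp
qed

lemma finite_grundy_colorings:
  assumes "finite V"
  shows "finite {k. \<exists>c. grundy_coloring V E c k}"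
proof (rule finite_subset)
  show "{k. \<exists>c. grundy_coloring V E c k} \<subseteq> {..card V}"
    using grundy_coloring_le_card[OF assms] by auto
qed simp

lemma grundy_number_ge:
  assumes "finite V" "grundy_coloring V E c k"
  shows "k \<le> grundy_number V E"
  unfolding grundy_number_def using finite_grundy_colorings[OF assms(1)] assms(2)
  by (auto intro: Max_ge)

lemma grundy_number_attained:
  assumes G: "simple_graph V E"
  obtains c where "grundy_coloring V E c (grundy_number V E)"
proof -
  have fin: "finite V"
    using G unfolding simple_graph_def by simp
  have "\<exists>c k. grundy_coloring V E c k"
  proof (cases "V = {}")
    case True
    then have "E = {}"
      using G unfolding simple_graph_def by auto
    then show ?thesis
      using True unfolding grundy_coloring_def by auto
  next
    case False
    have loopfree: "\<forall>x. {x, x} \<notin> E"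
      using simple_graph_edgeD(1)[OF G] by blast
    have "grundy_on E {} (\<lambda>_. 0)"
      unfolding grundy_on_def by simp
    then obtain c where "grundy_on E V c"
      using grundy_on_extend[OF loopfree fin empty_subsetI] by blast
    then show ?thesis
      using grundy_coloring_of_grundy_on[OF G _ False] by blast
  qed
  then have "grundy_number V E \<in> {k. \<exists>c. grundy_coloring V E c k}"
    unfolding grundy_number_def using finite_grundy_colorings[OF fin] by (intro Max_in) auto
  then show ?thesis
    using that by blast
qed

section \<open>Kept vertices\<close>

locale rooted_grundy =
  fixes V :: "'a set" and E :: "'a set set" and c :: "'a \<Rightarrow> nat" and r :: 'a
  assumes simple: "simple_graph V E" and grundy: "grundy_on E V c" and root_in_V: "r \<in> V"
begin

definition rep :: "'a set \<Rightarrow> nat \<Rightarrow> 'a" where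
  "rep B i = (SOME y. y \<in> B \<and> \<not> gate V E r B y \<and> c y = i)"

inductive kept :: "'a \<Rightarrow> bool" where
  root: "kept r"
| child: "\<lbrakk>is_block V E B; gate V E r B a; kept a; x \<in> B; \<not> gate V E r B x; c x \<noteq> c a;
    x = rep B (c x)\<rbrakk> \<Longrightarrow> kept x"

lemma kept_in_V: "kept x \<Longrightarrow> x \<in> V"
  by (induction rule: kept.induct) (use root_in_V block_subset[OF simple] in auto)

lemma kept_linked_root:
  assumes "kept x"
  shows "linked_in E V x r"
  using assms
proof cases
  case (child B a)
  obtain y where y: "y \<in> B" "y \<noteq> x" "linked_in E (V - {x}) y r"
    using child(4,5) unfolding gate_def by blast
  have "linked_in E V x y"
    using block_linked_in[OF simple child(1,4) y(1)] .
  moreover have "linked_in E V y r"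
    using y(3) by (rule linked_in_mono) auto
  ultimately show ?thesis
    by (rule linked_in_trans)
qed simp

lemma kept_parent:
  assumes "kept x" "is_block V E B" "x \<in> B" "\<not> gate V E r B x"
  shows "\<exists>a. gate V E r B a \<and> kept a \<and> c x \<noteq> c a \<and> x = rep B (c x)"
  using assms(1)
proof cases
  case root
  then show ?thesis
    using assms(3,4) unfolding gate_def by simp
next
  case (child B' a)
  have "B' = B"
    using non_gate_block_unique[OF simple child(1) assms(2) child(4,5) assms(3,4)] .
  then show ?thesis
    using child by blast
qed

lemma kept_gate:
  assumes "kept x" "is_block V E B" "x \<in> B"
  obtains a where "gate V E r B a" "kept a"
proof (cases "gate V E r B x")
  case False
  then show ?thesis
    using kept_parent[OF assms] that by blast
qed (use assms that in blast)

lemma kept_gate_unique: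
  assumes "kept w" "is_block V E B" "w \<in> B" "gate V E r B a" "gate V E r B b"
  shows "a = b"
  using gate_unique[OF simple assms(2,4,5,3) kept_linked_root[OF assms(1)]] .

lemma kept_color_unique:
  assumes x: "kept x" "x \<in> B" and y: "kept y" "y \<in> B" and B: "is_block V E B"
    and xy: "c x = c y"
  shows "x = y"
proof -
  have non_gate: "x = y"
    if x: "kept x" "x \<in> B" "\<not> gate V E r B x" and y: "kept y" "y \<in> B" and xy: "c x = c y" for x y
  proof -
    obtain a where a: "gate V E r B a" "c x \<noteq> c a" "x = rep B (c x)"
      using kept_parent[OF x(1) B x(2,3)] by blast
    show ?thesis
    proof (cases "gate V E r B y")
      case True
      have "y = a"
        using kept_gate_unique[OF x(1) B x(2) True a(1)] .
      then show ?thesis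
        using a(2) xy by simp
    next
      case False
      then have "y = rep B (c y)"
        using kept_parent[OF y(1) B y(2) False] by blast
      then show ?thesis
        using a(3) xy by simp
    qed
  qed
  show ?thesis
  proof (cases "gate V E r B x \<and> gate V E r B y")
    case True
    then show ?thesis
      using kept_gate_unique[OF x(1) B x(2)] by blast
  next
    case False
    then show ?thesis
      using non_gate[OF x _ y xy] non_gate[OF y _ x xy[symmetric]] by argo
  qed
qed

lemma kept_closure_neighbour:
  assumes x: "kept x" and j: "1 \<le> j" "j < c x"
  shows "\<exists>y. kept y \<and> {y, x} \<in> block_closure V E \<and> c y = j"
proof -
  obtain u where u: "{u, x} \<in> E" "c u = j"
    using grundy kept_in_V[OF x] j unfolding grundy_on_def by blast
  obtain B where B: "is_block V E B" "u \<in> B" "x \<in> B"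
    using edge_in_block[OF simple u(1)] by blast
  obtain a where a: "gate V E r B a" "kept a"
    using kept_gate[OF x B(1,3)] by blast
  show ?thesis
  proof (cases "c a = j")
    case True
    have "a \<in> B" "a \<noteq> x"
      using a(1) True j(2) unfolding gate_def by auto
    then have "{a, x} \<in> block_closure V E"
      using block_closure_edge_iff[OF simple] B(1,3) by blast
    then show ?thesis
      using a(2) True by blast
  next
    case False
    have "\<not> gate V E r B u"
      using kept_gate_unique[OF x B(1,3) a(1)] False u(2) by blast
    define y where "y = rep B j"
    have y: "y \<in> B" "\<not> gate V E r B y" "c y = j"
      using someI[of "\<lambda>y. y \<in> B \<and> \<not> gate V E r B y \<and> c y = j" u] B(2) \<open>\<not> gate V E r B u\<close> u(2)
      unfolding y_def rep_def by blast+
    have "kept y"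
      using child[OF B(1) a y(1,2)] y(3) False unfolding y_def by simp
    moreover have "y \<noteq> x"
      using y(3) j(2) by auto
    then have "{y, x} \<in> block_closure V E"
      using block_closure_edge_iff[OF simple] B(1,3) y(1) by blast
    ultimately show ?thesis
      using y(3) by blast
  qed
qed

lemma grundy_on_kept: "grundy_on (block_closure V E) {x. kept x} c"
  unfolding grundy_on_def
proof (intro conjI ballI allI impI)
  fix v
  assume "v \<in> {x. kept x}"
  then show "1 \<le> c v"
    using grundy kept_in_V unfolding grundy_on_def by auto
next
  fix x y
  assume "x \<in> {x. kept x}" "y \<in> {x. kept x}" "{x, y} \<in> block_closure V E"
  moreover obtain B where "is_block V E B" "x \<in> B" "y \<in> B" "x \<noteq> y"
    using calculation(3) block_closure_edge_iff[OF simple] by blast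
  ultimately show "c x \<noteq> c y"
    using kept_color_unique by blast
next
  fix v i
  assume "v \<in> {x. kept x}" "1 \<le> i \<and> i < c v"
  then show "\<exists>u\<in>{x. kept x}. {u, v} \<in> block_closure V E \<and> c u = i"
    using kept_closure_neighbour by auto
qed

theorem root_color_le_grundy_number_closure: "c r \<le> grundy_number V (block_closure V E)"
proof -
  have G': "simple_graph V (block_closure V E)"
    using simple by (rule simple_graph_block_closure)
  have fin: "finite V"
    using simple unfolding simple_graph_def by simp
  obtain c' where c': "grundy_on (block_closure V E) V c'" "\<forall>w\<in>{x. kept x}. c' w = c w"
    using grundy_on_extend[OF _ fin _ grundy_on_kept] simple_graph_edgeD(1)[OF G'] kept_in_V by blast
  have coloring: "grundy_coloring V (block_closure V E) c' (Max (c' ` V))"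
    using grundy_coloring_of_grundy_on[OF G' c'(1)] root_in_V by blast
  have "c r = c' r"
    using c'(2) kept.root by simp
  also have "\<dots> \<le> Max (c' ` V)"
    using fin root_in_V by (intro Max_ge) auto
  also have "\<dots> \<le> grundy_number V (block_closure V E)"
    using grundy_number_ge[OF fin coloring] .
  finally show ?thesis .
qed

end

theorem proposition7:
  fixes V :: "'a set" and E :: "'a set set"
  assumes "simple_graph V E"
  shows "grundy_number V E \<le> grundy_number V (block_closure V E)"
proof -
  obtain c where c: "grundy_coloring V E c (grundy_number V E)"
    using grundy_number_attained[OF assms] .
  show ?thesis
  proof (cases "grundy_number V E = 0")
    case False
    then obtain r where r: "r \<in> V" "c r = grundy_number V E"
      using c unfolding grundy_coloring_def by force
    interpret rooted_grundy V E c r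
      using assms grundy_on_of_grundy_coloring[OF c] r(1) by unfold_locales
    show ?thesis
      using root_color_le_grundy_number_closure r(2) by simp
  qed simp
qed

end
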